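(* Let $\delta\in(0,1)$, $f\in X^{\log}_{3+\delta}(\mathbb R^2)^2$ and $F\in X_{2+\delta}(\mathbb R^2)^{2\times2}$. Let $\Gamma^S$ be the $2\times2$ matrix function $$\Gamma^S_{ij}(x):=\frac{1}{4\pi}\Big(\delta_{ij}\log\big(|x|^{-1}\big)+\frac{x_ix_j}{|x|^2}\Big).$$ Then for $i=1,2$, $$\Gamma^S_{il}*f_l(x)=\Big[\int_{\mathbb R^2}f(y)\,dy\Big]_l\Gamma^S_{il}(x)-\Big[\int_{\mathbb R^2}f(y)\otimes y\,dy\Big]_{lj}\partial_j\Gamma^S_{il}(x)+r_i(x),\qquad \sup_{|x|\ge e}|x|^{1+\delta}|r_i(x)|\le C\|f\|_{X^{\log}_{3+\delta}},$$ and $$\partial_j\Gamma^S_{il}*F_{lj}(x)=\Big[\int_{\mathbb R^2}F(y)\,dy\Big]_{lj}\partial_j\Gamma^S_{il}(x)+R_i(x),\qquad \sup_{|x|\ge e}|x|^{1+\delta}|R_i(x)|\le C'\|F\|_{X_{2+\delta}},$$ for constants $C,C'>0$ (independent of $f,F$).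
   Context: Summation over repeated indices is used; $*$ is convolution on $\mathbb R^2$ and $(f(y)\otimes y)_{lj}=f_l(y)y_j$. For $\alpha>0$, $X_\alpha(\mathbb R^2)$ is the space of $f\in L^\infty(\mathbb R^2)$ with $\|f\|_{X_\alpha}:=\sup_{x}(1+|x|)^\alpha|f(x)|<\infty$, and $X^{\log}_\alpha(\mathbb R^2)$ is the space of $f\in L^\infty(\mathbb R^2)$ with $\|f\|_{X^{\log}_\alpha}:=\sup_x(1+|x|)^\alpha\log(e+|x|)|f(x)|<\infty$. $\Gamma^S$ is the fundamental solution of the steady Stokes system $-\Delta v+\nabla q=f$, $\operatorname{div}v=0$ in $\mathbb R^2$. *)

theory Defs
  imports "HOL-Analysis.Analysis"
begin

definition GammaS :: "2 \<Rightarrow> 2 \<Rightarrow> real^2 \<Rightarrow> real" where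
  "GammaS i j x = (1 / (4 * pi)) *
     ((if i = j then 1 else 0) * ln (1 / norm x) + (x $ i) * (x $ j) / (norm x)^2)"

definition partial :: "2 \<Rightarrow> (real^2 \<Rightarrow> real) \<Rightarrow> real^2 \<Rightarrow> real" where
  "partial j g x = deriv (\<lambda>t. g (x + t *\<^sub>R axis j 1)) 0"

definition conv :: "(real^2 \<Rightarrow> real) \<Rightarrow> (real^2 \<Rightarrow> real) \<Rightarrow> real^2 \<Rightarrow> real" where
  "conv g h x = (LINT y|lborel. g (x - y) * h y)"

definition X_norm :: "real \<Rightarrow> (real^2 \<Rightarrow> 'a::real_normed_vector) \<Rightarrow> real" where
  "X_norm \<alpha> f = (SUP x. (1 + norm x) powr \<alpha> * norm (f x))"

definition X_space :: "real \<Rightarrow> (real^2 \<Rightarrow> 'a::{real_normed_vector, second_countable_topology}) set" where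
  "X_space \<alpha> = {f. f \<in> borel_measurable lborel \<and>
      bdd_above (range (\<lambda>x. (1 + norm x) powr \<alpha> * norm (f x)))}"

definition Xlog_norm :: "real \<Rightarrow> (real^2 \<Rightarrow> 'a::real_normed_vector) \<Rightarrow> real" where
  "Xlog_norm \<alpha> f = (SUP x. (1 + norm x) powr \<alpha> * ln (exp 1 + norm x) * norm (f x))"

definition Xlog_space :: "real \<Rightarrow> (real^2 \<Rightarrow> 'a::{real_normed_vector, second_countable_topology}) set" where
  "Xlog_space \<alpha> = {f. f \<in> borel_measurable lborel \<and>
      bdd_above (range (\<lambda>x. (1 + norm x) powr \<alpha> * ln (exp 1 + norm x) * norm (f x)))}"

end

theory Submission
  imports Defs
begin

(*
  Put R = |x|/2 and split each convolution integral at |y| = R.  For |y| <= R the kernel is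
  replaced by its Taylor remainder: the second derivatives of GammaS are O(|z|^-2), so
  GammaS(x - y) - GammaS(x) + y . grad GammaS(x) = O(|y|^2/|x|^2) and
  grad GammaS(x - y) - grad GammaS(x) = O(|y|/|x|^2).  For |y| >= R the terms are estimated
  one by one: |grad GammaS(z)| <= 1/|z|, and |GammaS(x - y)| is at most a multiple of
  ln(e + |y|), which the logarithmic weight of X^log absorbs, except on the unit disc around x,
  where |GammaS(x - y)| <= 1/|x - y| is integrable.  Against the weights
  (1 + |y|)^-(3+delta) / ln(e + |y|) and (1 + |y|)^-(2+delta) all pieces become integrals of
  powers of |y| over discs and their complements, computed in polar coordinates, and each is
  O(R^-(1+delta)).
*)

section \<open>Radial integrals\<close>

(* Under y \<mapsto> -norm y the generating half-lines {s<..} pull back to balls, which have finite measure. *)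
lemma distr_uminus_norm_lborel:
  defines "n \<equiv> DIM('a::euclidean_space)"
  shows "distr (lborel :: 'a measure) borel (\<lambda>y. - norm y) =
    density lborel (\<lambda>s. ennreal (n * unit_ball_vol n * (- s) ^ (n - 1)) * indicator {..0} s)"
    (is "_ = density lborel ?\<rho>")
proof (rule measure_eqI_lessThan)
  have upper: "emeasure (distr (lborel :: 'a measure) borel (\<lambda>y. - norm y)) {x<..}
      = ennreal (unit_ball_vol n * (max 0 (- x)) ^ n)" for x
  proof -
    have "(\<lambda>y::'a. - norm y) -` {x<..} \<inter> space lborel = ball 0 (max 0 (- x))"
      by (auto simp: dist_norm less_max_iff_disj)
    then show ?thesis
      by (simp add: emeasure_distr emeasure_ball n_def)
  qed
  show "emeasure (distr lborel borel (\<lambda>y::'a. - norm y)) {x<..} < \<infinity>" for x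
    unfolding upper by simp
  show "emeasure (distr lborel borel (\<lambda>y::'a. - norm y)) {x<..} = emeasure (density lborel ?\<rho>) {x<..}"
    for x
  proof (cases "x < 0")
    case True
    have "emeasure (density lborel ?\<rho>) {x<..} =
        (\<integral>\<^sup>+s. ennreal (n * unit_ball_vol n * (- s) ^ (n - 1)) * indicator {x..0} s \<partial>lborel)"
      using AE_lborel_singleton[of x]
      by (subst emeasure_density)
         (auto intro!: nn_integral_cong_AE elim!: eventually_mono split: split_indicator)
    also have "\<dots> = ennreal ((- unit_ball_vol n * (- 0) ^ n) - (- unit_ball_vol n * (- x) ^ n))"
      using True
      by (intro nn_integral_FTC_Icc)
         (auto intro!: derivative_eq_intros simp: n_def mult_nonneg_nonneg zero_le_power)
    finally show ?thesis
      using True by (simp add: upper n_def)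
  next
    case False
    then have zero: "?\<rho> s * indicator {x<..} s = 0" for s
      by (simp split: split_indicator)
    have "emeasure (density lborel ?\<rho>) {x<..} = (\<integral>\<^sup>+s. ?\<rho> s * indicator {x<..} s \<partial>lborel)"
      by (rule emeasure_density) simp_all
    also have "\<dots> = 0"
      by (simp only: zero nn_integral_const mult_zero_left)
    finally show ?thesis
      using False by (simp add: upper n_def)
  qed
qed simp_all

lemma nn_integral_radial:
  fixes \<phi> :: "real \<Rightarrow> ennreal"
  assumes [measurable]: "\<phi> \<in> borel_measurable borel"
  defines "n \<equiv> DIM('a::euclidean_space)"
  shows "(\<integral>\<^sup>+y. \<phi> (norm (y::'a)) \<partial>lborel) =
    (\<integral>\<^sup>+r\<in>{0..}. \<phi> r * ennreal (n * unit_ball_vol n * r ^ (n - 1)) \<partial>lborel)"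
proof -
  have "(\<integral>\<^sup>+y. \<phi> (norm (y::'a)) \<partial>lborel) =
      (\<integral>\<^sup>+s. \<phi> (- s) \<partial>distr (lborel :: 'a measure) borel (\<lambda>y. - norm y))"
    by (subst nn_integral_distr) auto
  also have "\<dots> = (\<integral>\<^sup>+s. ennreal (n * unit_ball_vol n * (- s) ^ (n - 1)) * indicator {..0} s * \<phi> (- s) \<partial>lborel)"
    unfolding distr_uminus_norm_lborel n_def by (subst nn_integral_density) auto
  also have "\<dots> = (\<integral>\<^sup>+s. ennreal (n * unit_ball_vol n * (- s) ^ (n - 1)) * indicator {..0} s * \<phi> (- s)
      \<partial>distr lborel borel uminus)"
    by (simp add: lborel_distr_uminus)
  also have "\<dots> = (\<integral>\<^sup>+r\<in>{0..}. \<phi> r * ennreal (n * unit_ball_vol n * r ^ (n - 1)) \<partial>lborel)"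
    by (subst nn_integral_distr) (auto intro!: nn_integral_cong simp: mult_ac split: split_indicator)
  finally show ?thesis .
qed

corollary nn_integral_radial_plane:
  fixes \<phi> :: "real \<Rightarrow> ennreal"
  assumes "\<phi> \<in> borel_measurable borel"
  shows "(\<integral>\<^sup>+y. \<phi> (norm (y::real^2)) \<partial>lborel) = (\<integral>\<^sup>+r\<in>{0..}. \<phi> r * ennreal (2 * pi * r) \<partial>lborel)"
  using nn_integral_radial[OF assms, where 'a="real^2"] by (simp add: unit_ball_vol_2 mult_ac)

lemma nn_integral_diff_lborel:
  fixes g :: "'a::euclidean_space \<Rightarrow> ennreal"
  assumes [measurable]: "g \<in> borel_measurable borel"
  shows "(\<integral>\<^sup>+y. g (x - y) \<partial>lborel) = (\<integral>\<^sup>+z. g z \<partial>lborel)"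
proof -
  have "(\<integral>\<^sup>+z. g z \<partial>lborel) = (\<integral>\<^sup>+z. g z \<partial>distr lborel borel (\<lambda>z. x + (-1) *\<^sub>R z))"
    using lborel_affine[of "-1" x] by (simp add: density_1)
  also have "\<dots> = (\<integral>\<^sup>+y. g (x - y) \<partial>lborel)"
    by (subst nn_integral_distr) auto
  finally show ?thesis ..
qed

lemma powr_minus_mult_self: "(r::real) \<ge> 0 \<Longrightarrow> r powr - a * r = r powr (1 - a)"
  by (cases "r = 0") (auto simp: powr_diff powr_minus field_simps)

lemma nn_integral_cball_norm_powr:
  assumes "a < 2" "R \<ge> 0"
  shows "(\<integral>\<^sup>+y\<in>cball 0 R. ennreal (norm (y::real^2) powr - a) \<partial>lborel) =
    ennreal (2 * pi * (R powr (2 - a) / (2 - a)))"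
proof -
  have "(\<integral>\<^sup>+y\<in>cball 0 R. ennreal (norm (y::real^2) powr - a) \<partial>lborel) =
      (\<integral>\<^sup>+r\<in>{0..}. ennreal (r powr - a) * indicator {..R} r * ennreal (2 * pi * r) \<partial>lborel)"
    by (subst nn_integral_radial_plane[symmetric]) (auto simp: indicator_def)
  also have "\<dots> = (\<integral>\<^sup>+r. ennreal (2 * pi * r powr (1 - a)) * indicator {0..R} r \<partial>lborel)"
    by (intro nn_integral_cong)
       (auto simp: indicator_def ennreal_mult'[symmetric] powr_minus_mult_self[symmetric] mult_ac)
  also have "\<dots> = ennreal (2 * pi * (R powr (1 - a + 1) / (1 - a + 1)))"
    using assms
    by (intro nn_integral_has_integral_lebesgue' has_integral_mult_right has_integral_powr_from_0) auto
  finally show ?thesis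
    by (simp add: algebra_simps)
qed

lemma nn_integral_outside_ball_norm_powr:
  assumes "a > 2" "R > 0"
  shows "(\<integral>\<^sup>+y\<in>- ball 0 R. ennreal (norm (y::real^2) powr - a) \<partial>lborel) =
    ennreal (2 * pi * (R powr (2 - a) / (a - 2)))"
proof -
  have "(\<integral>\<^sup>+y\<in>- ball 0 R. ennreal (norm (y::real^2) powr - a) \<partial>lborel) =
      (\<integral>\<^sup>+r\<in>{0..}. ennreal (r powr - a) * indicator {R..} r * ennreal (2 * pi * r) \<partial>lborel)"
    by (subst nn_integral_radial_plane[symmetric]) (auto simp: indicator_def not_less)
  also have "\<dots> = (\<integral>\<^sup>+r. ennreal (2 * pi * r powr (1 - a)) * indicator {R..} r \<partial>lborel)"
    using assms
    by (intro nn_integral_cong)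
       (auto simp: indicator_def ennreal_mult'[symmetric] powr_minus_mult_self[symmetric] mult_ac)
  also have "\<dots> = ennreal (2 * pi * (- (R powr (1 - a + 1)) / (1 - a + 1)))"
    using assms
    by (intro nn_integral_has_integral_lebesgue' has_integral_mult_right has_integral_powr_to_inf) auto
  finally show ?thesis
    by (simp add: algebra_simps minus_divide_right)
qed

lemma ball_cball_in_sets_borel [measurable]:
  fixes c :: "'a::metric_space"
  shows "ball c r \<in> sets borel" "cball c r \<in> sets borel"
  by simp_all

lemma nn_integral_cball_inverse_dist:
  assumes "R \<ge> 0"
  shows "(\<integral>\<^sup>+y\<in>cball x R. ennreal (1 / norm (x - y :: real^2)) \<partial>lborel) = ennreal (2 * pi * R)"
proof -
  have "(\<integral>\<^sup>+y\<in>cball x R. ennreal (1 / norm (x - y :: real^2)) \<partial>lborel) =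
      (\<integral>\<^sup>+y. ennreal (norm (x - y) powr - 1) * indicator (cball 0 R) (x - y) \<partial>lborel)"
    by (auto intro!: nn_integral_cong simp: dist_norm norm_minus_commute indicator_def)
  also have "\<dots> = (\<integral>\<^sup>+z\<in>cball 0 R. ennreal (norm (z :: real^2) powr - 1) \<partial>lborel)"
    by (rule nn_integral_diff_lborel[where g="\<lambda>z. ennreal (norm z powr - 1) * indicator (cball 0 R) z"]) simp
  also have "\<dots> = ennreal (2 * pi * R)"
    using nn_integral_cball_norm_powr[of 1 R] assms by simp
  finally show ?thesis .
qed

lemma nn_integral_scaled_indicator:
  assumes "0 \<le> c" "A \<in> sets M" "g \<in> borel_measurable M" "(\<integral>\<^sup>+y\<in>A. ennreal (g y) \<partial>M) = ennreal I"
  shows "(\<integral>\<^sup>+y. ennreal (c * (indicator A y * g y)) \<partial>M) = ennreal (c * I)"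
proof -
  have "ennreal (c * (indicator A y * g y)) = ennreal c * (ennreal (g y) * indicator A y)" for y
    using assms(1) by (simp add: ennreal_mult' indicator_def)
  then show ?thesis
    using assms by (simp add: nn_integral_cmult ennreal_mult')
qed

lemma one_plus_powr_neg_le: "0 < r \<Longrightarrow> 0 \<le> a \<Longrightarrow> (1 + r) powr - a \<le> r powr - (a::real)"
  by (intro powr_mono2') auto

lemma power_mult_one_plus_powr_neg_le:
  assumes "0 \<le> r" "0 \<le> a" "0 < k"
  shows "r ^ k * (1 + r) powr - a \<le> r powr (real k - a)"
proof (cases "r = 0")
  case False
  then have "r ^ k * (1 + r) powr - a \<le> r powr real k * r powr - a"
    using assms by (simp add: powr_realpow one_plus_powr_neg_le mult_left_mono)
  also have "\<dots> = r powr (real k - a)"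
    by (simp add: powr_add[symmetric])
  finally show ?thesis .
qed (use assms in \<open>simp add: zero_power\<close>)

lemma mult_le_one_plus_powr:
  fixes r a :: real
  assumes "0 \<le> r"
  shows "r * (1 + r) powr - a \<le> (1 + r) powr (1 - a)"
proof -
  have "r * (1 + r) powr - a \<le> (1 + r) * (1 + r) powr - a"
    by (intro mult_right_mono) auto
  also have "\<dots> = (1 + r) powr (1 - a)"
    using powr_minus_mult_self[of "1 + r" a] assms by (simp add: mult.commute)
  finally show ?thesis .
qed

lemma nn_integral_one_plus_norm_powr_le:
  assumes "2 < s"
  shows "(\<integral>\<^sup>+y. ennreal ((1 + norm (y::real^2)) powr - s) \<partial>lborel) \<le> ennreal (pi + 2 * pi / (s - 2))"
proof -
  have "(\<integral>\<^sup>+y. ennreal ((1 + norm (y::real^2)) powr - s) \<partial>lborel) \<le>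
      (\<integral>\<^sup>+y. indicator (cball 0 1) y + ennreal (norm y powr - s) * indicator (- ball 0 1) y
        \<partial>(lborel :: (real^2) measure))"
  proof (rule nn_integral_mono)
    fix y :: "real^2"
    show "ennreal ((1 + norm y) powr - s) \<le>
        indicator (cball 0 1) y + ennreal (norm y powr - s) * indicator (- ball 0 1) y"
    proof (cases "norm y \<le> 1")
      case True
      have "ennreal ((1 + norm y) powr - s) \<le> 1"
        using assms powr_mono2'[of "- s" 1 "1 + norm y"] by simp
      then show ?thesis
        using True by (auto intro: add_increasing2)
    next
      case False
      then have "y \<noteq> 0"
        by auto
      then show ?thesis
        using False assms one_plus_powr_neg_le[of "norm y" s] by (auto intro!: ennreal_leI)
    qed
  qed
  also have "\<dots> = ennreal pi + ennreal (2 * pi * (1 powr (2 - s) / (s - 2)))"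
    using assms
    by (simp add: nn_integral_add nn_integral_outside_ball_norm_powr emeasure_cball unit_ball_vol_2)
  also have "\<dots> = ennreal (pi + 2 * pi / (s - 2))"
    using assms by (simp add: ennreal_plus)
  finally show ?thesis .
qed

section \<open>Kernels against weighted data\<close>

lemma weighted_kernel_integral_bound:
  fixes k \<phi> w :: "'a \<Rightarrow> real"
  assumes [measurable]: "k \<in> borel_measurable M" "\<phi> \<in> borel_measurable M" "w \<in> borel_measurable M"
    and "\<And>y. \<bar>\<phi> y\<bar> \<le> N * w y" "0 \<le> N"
    and "(\<integral>\<^sup>+y. ennreal (\<bar>k y\<bar> * w y) \<partial>M) \<le> ennreal B" "0 \<le> B"
  shows "integrable M (\<lambda>y. k y * \<phi> y)" "\<bar>\<integral>y. k y * \<phi> y \<partial>M\<bar> \<le> N * B"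
proof -
  have "ennreal (norm (k y * \<phi> y)) \<le> ennreal N * ennreal (\<bar>k y\<bar> * w y)" for y
  proof -
    have "norm (k y * \<phi> y) \<le> \<bar>k y\<bar> * (N * w y)"
      unfolding real_norm_def abs_mult using assms(4) by (rule mult_left_mono) simp
    then show ?thesis
      using assms(5) by (simp add: ennreal_mult'[symmetric] ennreal_leI mult.left_commute)
  qed
  then have "(\<integral>\<^sup>+y. ennreal (norm (k y * \<phi> y)) \<partial>M) \<le> (\<integral>\<^sup>+y. ennreal N * ennreal (\<bar>k y\<bar> * w y) \<partial>M)"
    by (rule nn_integral_mono)
  also have "\<dots> \<le> ennreal (N * B)"
    using assms(5-7) by (simp add: nn_integral_cmult ennreal_mult' mult_left_mono)
  finally have bound: "(\<integral>\<^sup>+y. ennreal (norm (k y * \<phi> y)) \<partial>M) \<le> ennreal (N * B)" .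
  then show "integrable M (\<lambda>y. k y * \<phi> y)"
    by (intro integrableI_bounded) (auto intro: le_less_trans)
  then have "ennreal (norm (\<integral>y. k y * \<phi> y \<partial>M)) \<le> (\<integral>\<^sup>+y. ennreal (norm (k y * \<phi> y)) \<partial>M)"
    by (rule integral_norm_bound_ennreal)
  also note bound
  finally show "\<bar>\<integral>y. k y * \<phi> y \<partial>M\<bar> \<le> N * B"
    using assms(5,7) by (simp add: ennreal_le_iff)
qed

lemma integrable_of_powr_decay:
  fixes g :: "real^2 \<Rightarrow> real"
  assumes "g \<in> borel_measurable lborel" "2 < s" "\<And>y. \<bar>g y\<bar> \<le> N * (1 + norm y) powr - s"
  shows "integrable lborel g"
proof -
  have "0 \<le> N"
    using assms(3)[of 0] by simp
  then have "integrable lborel (\<lambda>y. 1 * g y)"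
    using assms nn_integral_one_plus_norm_powr_le[OF assms(2)]
    by (intro weighted_kernel_integral_bound(1)[where w="\<lambda>y. (1 + norm y) powr - s" and N=N
          and B="pi + 2 * pi / (s - 2)"]) auto
  then show ?thesis
    by simp
qed

lemma one_le_ln_exp1_add: "0 \<le> n \<Longrightarrow> 1 \<le> ln (exp 1 + (n::real))"
  using ln_mono[of "exp 1" "exp 1 + n"] by simp

lemma divide_ln_exp1_add_le: "0 \<le> c \<Longrightarrow> 0 \<le> r \<Longrightarrow> c / ln (exp 1 + r) \<le> (c::real)"
  using one_le_ln_exp1_add[of r] by (simp add: divide_le_eq mult_le_cancel_left1)

lemma borel_measurable_vec_nth [measurable]: "(\<lambda>v::'a::topological_space^'n. v $ i) \<in> borel_measurable borel"
  by (intro borel_measurable_continuous_onI continuous_intros)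

lemma X_space_norm_le:
  assumes "F \<in> X_space \<alpha>"
  shows "norm (F y) \<le> X_norm \<alpha> F * (1 + norm y) powr - \<alpha>"
proof -
  have "(1 + norm y) powr \<alpha> * norm (F y) \<le> X_norm \<alpha> F"
    using assms unfolding X_space_def X_norm_def by (auto intro: cSUP_upper)
  moreover have "0 < (1 + norm y) powr \<alpha>"
    using add_pos_nonneg[OF zero_less_one norm_ge_zero, of y] by simp
  ultimately show ?thesis
    by (simp add: powr_minus field_simps)
qed

lemma X_norm_nonneg: "F \<in> X_space \<alpha> \<Longrightarrow> 0 \<le> X_norm \<alpha> F"
  using X_space_norm_le[of F \<alpha> 0] by (simp add: order.trans[OF norm_ge_zero])

lemma Xlog_space_norm_le:
  assumes "f \<in> Xlog_space \<alpha>"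
  shows "norm (f y) \<le> Xlog_norm \<alpha> f * ((1 + norm y) powr - \<alpha> / ln (exp 1 + norm y))"
proof -
  have "(1 + norm y) powr \<alpha> * ln (exp 1 + norm y) * norm (f y) \<le> Xlog_norm \<alpha> f"
    using assms unfolding Xlog_space_def Xlog_norm_def by (auto intro: cSUP_upper)
  moreover have "0 < ln (exp 1 + norm y) * (1 + norm y) powr \<alpha>"
    using one_le_ln_exp1_add[of "norm y"] add_pos_nonneg[OF zero_less_one norm_ge_zero, of y] by simp
  ultimately show ?thesis
    by (simp add: powr_minus field_simps)
qed

lemma Xlog_norm_nonneg: "f \<in> Xlog_space \<alpha> \<Longrightarrow> 0 \<le> Xlog_norm \<alpha> f"
  using Xlog_space_norm_le[of f \<alpha> 0] by (simp add: order.trans[OF norm_ge_zero])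

lemma X_space_component_le:
  fixes F :: "real^2 \<Rightarrow> real^'m^'n"
  assumes "F \<in> X_space \<alpha>"
  shows "\<bar>F y $ l $ j\<bar> \<le> X_norm \<alpha> F * (1 + norm y) powr - \<alpha>"
  using component_le_norm_cart[of "F y $ l" j] Finite_Cartesian_Product.norm_nth_le[of "F y" l]
    X_space_norm_le[OF assms, of y]
  by linarith

lemma Xlog_space_component_le:
  fixes f :: "real^2 \<Rightarrow> real^'n"
  assumes "f \<in> Xlog_space \<alpha>"
  shows "\<bar>f y $ l\<bar> \<le> Xlog_norm \<alpha> f * ((1 + norm y) powr - \<alpha> / ln (exp 1 + norm y))"
  using component_le_norm_cart[of "f y" l] Xlog_space_norm_le[OF assms, of y] by linarith

lemma integrable_Xlog_space_moments:
  fixes f :: "real^2 \<Rightarrow> real^2"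
  assumes f: "f \<in> Xlog_space (3 + \<delta>)" and "0 < \<delta>"
  shows "integrable lborel (\<lambda>y. f y $ l)" "integrable lborel (\<lambda>y. f y $ l * y $ j)"
proof -
  define N where "N = Xlog_norm (3 + \<delta>) f"
  have [measurable]: "f \<in> borel_measurable borel"
    using f by (simp add: Xlog_space_def)
  have meas1: "(\<lambda>y. f y $ l) \<in> borel_measurable lborel"
    by measurable
  have meas2: "(\<lambda>y. f y $ l * y $ j) \<in> borel_measurable lborel"
    by measurable
  have "0 \<le> N"
    unfolding N_def using f by (rule Xlog_norm_nonneg)
  have decay: "\<bar>f y $ l\<bar> \<le> N * (1 + norm y) powr - (3 + \<delta>)" for y
  proof -
    have "\<bar>f y $ l\<bar> \<le> N * ((1 + norm y) powr - (3 + \<delta>) / ln (exp 1 + norm y))"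
      unfolding N_def using f by (rule Xlog_space_component_le)
    also have "\<dots> \<le> N * (1 + norm y) powr - (3 + \<delta>)"
      using \<open>0 \<le> N\<close> by (intro mult_left_mono divide_ln_exp1_add_le) auto
    finally show ?thesis .
  qed
  then show "integrable lborel (\<lambda>y. f y $ l)"
    using assms by (intro integrable_of_powr_decay[where s="3 + \<delta>", OF meas1]) auto
  show "integrable lborel (\<lambda>y. f y $ l * y $ j)"
  proof (rule integrable_of_powr_decay[where s="2 + \<delta>" and N=N, OF meas2])
    fix y :: "real^2"
    have "\<bar>f y $ l * y $ j\<bar> \<le> N * (1 + norm y) powr - (3 + \<delta>) * norm y"
      unfolding abs_mult using decay \<open>0 \<le> N\<close> by (intro mult_mono component_le_norm_cart) auto
    also have "\<dots> \<le> N * (1 + norm y) powr - (2 + \<delta>)"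
      using mult_left_mono[OF mult_le_one_plus_powr[of "norm y" "3 + \<delta>"] \<open>0 \<le> N\<close>]
      by (simp add: algebra_simps)
    finally show "\<bar>f y $ l * y $ j\<bar> \<le> N * (1 + norm y) powr - (2 + \<delta>)" .
  qed (use assms in auto)
qed

section \<open>Derivatives of the Stokeslet\<close>

(* GammaS_deriv i l z u and GammaS_deriv2 i l z u v are the first and second derivatives of
   GammaS i l at z in the directions u and v. *)
definition GammaS_deriv :: "2 \<Rightarrow> 2 \<Rightarrow> real^2 \<Rightarrow> real^2 \<Rightarrow> real" where
  "GammaS_deriv i l z u = (1 / (4 * pi)) *
     (- (if i = l then 1 else 0) * (z \<bullet> u) / (z \<bullet> z) + (u $ i * z $ l + z $ i * u $ l) / (z \<bullet> z)
      - 2 * z $ i * z $ l * (z \<bullet> u) / (z \<bullet> z)\<^sup>2)"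

definition GammaS_deriv2 :: "2 \<Rightarrow> 2 \<Rightarrow> real^2 \<Rightarrow> real^2 \<Rightarrow> real^2 \<Rightarrow> real" where
  "GammaS_deriv2 i l z u v = (1 / (4 * pi)) *
     (- (if i = l then 1 else 0) * ((u \<bullet> v) / (z \<bullet> z) - 2 * (z \<bullet> u) * (z \<bullet> v) / (z \<bullet> z)\<^sup>2)
      + (u $ i * v $ l + v $ i * u $ l) / (z \<bullet> z)
      - 2 * ((u $ i * z $ l + z $ i * u $ l) * (z \<bullet> v) + (v $ i * z $ l + z $ i * v $ l) * (z \<bullet> u)
             + z $ i * z $ l * (u \<bullet> v)) / (z \<bullet> z)\<^sup>2
      + 8 * z $ i * z $ l * (z \<bullet> u) * (z \<bullet> v) / (z \<bullet> z) ^ 3)"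

lemma GammaS_eq_inner:
  "GammaS i l z = (1 / (4 * pi)) * ((if i = l then 1 else 0) * (- ln (z \<bullet> z) / 2) + z $ i * z $ l / (z \<bullet> z))"
proof -
  have "ln (1 / norm z) = - ln (z \<bullet> z) / 2"
    by (cases "z = 0") (simp_all add: ln_div norm_eq_sqrt_inner ln_sqrt)
  then show ?thesis
    by (simp add: GammaS_def power2_norm_eq_inner)
qed

lemma inner_line_self:
  "(a + s *\<^sub>R v) \<bullet> (a + s *\<^sub>R v) = a \<bullet> a + 2 * s * (a \<bullet> v) + s\<^sup>2 * (v \<bullet> v)"
  by (simp add: inner_add_left inner_add_right inner_commute power2_eq_square algebra_simps)

lemma has_real_derivative_line_shift:
  fixes a v :: "'a::real_vector"
  assumes "((\<lambda>s. f (a + t *\<^sub>R v + s *\<^sub>R v)) has_real_derivative D) (at 0)"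
  shows "((\<lambda>s. f (a + s *\<^sub>R v)) has_real_derivative D) (at t)"
proof -
  have "(\<lambda>s. f (a + t *\<^sub>R v + s *\<^sub>R v)) = (\<lambda>s. f (a + (s + t) *\<^sub>R v))"
    by (simp add: scaleR_add_left algebra_simps)
  then show ?thesis
    using assms DERIV_shift[of "\<lambda>s. f (a + s *\<^sub>R v)" D 0 t] by simp
qed

lemma GammaS_line_has_real_derivative:
  assumes "a + t *\<^sub>R v \<noteq> 0"
  shows "((\<lambda>s. GammaS i l (a + s *\<^sub>R v)) has_real_derivative GammaS_deriv i l (a + t *\<^sub>R v) v) (at t)"
proof -
  define b where "b = a + t *\<^sub>R v"
  have "b \<bullet> b > 0"
    using assms by (simp add: b_def)
  then have "((\<lambda>s. GammaS i l (b + s *\<^sub>R v)) has_real_derivative GammaS_deriv i l b v) (at 0)"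
    unfolding GammaS_eq_inner inner_line_self vector_add_component vector_scaleR_component GammaS_deriv_def
    by (auto intro!: derivative_eq_intros simp: field_simps power2_eq_square)
  then show ?thesis
    unfolding b_def by (rule has_real_derivative_line_shift)
qed

lemma GammaS_deriv_line_has_real_derivative:
  assumes "a + t *\<^sub>R v \<noteq> 0"
  shows "((\<lambda>s. GammaS_deriv i l (a + s *\<^sub>R v) u) has_real_derivative
    GammaS_deriv2 i l (a + t *\<^sub>R v) u v) (at t)"
proof -
  define b where "b = a + t *\<^sub>R v"
  have "b \<bullet> b > 0"
    using assms by (simp add: b_def)
  then have "((\<lambda>s. GammaS_deriv i l (b + s *\<^sub>R v) u) has_real_derivative GammaS_deriv2 i l b u v) (at 0)"
    unfolding GammaS_deriv_def inner_add_left inner_add_right inner_scaleR_left inner_scaleR_right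
      vector_add_component vector_scaleR_component GammaS_deriv2_def
    by (auto intro!: derivative_eq_intros simp: field_simps power2_eq_square power3_eq_cube inner_commute)
  then show ?thesis
    unfolding b_def by (rule has_real_derivative_line_shift)
qed

lemma partial_GammaS:
  assumes "z \<noteq> 0"
  shows "partial j (GammaS i l) z = GammaS_deriv i l z (axis j 1)"
  using GammaS_line_has_real_derivative[of z 0 "axis j 1" i l] assms
  unfolding partial_def by (simp add: DERIV_imp_deriv)

lemma GammaS_deriv_eq_sum_axis:
  "GammaS_deriv i l z u = (\<Sum>j\<in>UNIV. u $ j * GammaS_deriv i l z (axis j 1))"
proof -
  \<comment> \<open>Hiding \<open>z \<bullet> z\<close> keeps \<open>field_simps\<close> from expanding it into coordinates.\<close>
  obtain q where q: "z \<bullet> z = q"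
    by blast
  have "z \<bullet> w = z $ 1 * w $ 1 + z $ 2 * w $ 2" for w :: "real^2"
    by (simp add: inner_vec_def sum_2)
  then show ?thesis
    unfolding GammaS_deriv_def q using exhaust_2[of i] exhaust_2[of l]
    by (cases "q = 0") (auto simp: sum_2 axis_def field_simps eval_nat_numeral)
qed

lemma GammaS_deriv_uminus: "GammaS_deriv i l z (- u) = - GammaS_deriv i l z u"
  by (simp add: GammaS_deriv_def algebra_simps diff_divide_distrib add_divide_distrib)

lemma borel_measurable_GammaS [measurable]: "GammaS i l \<in> borel_measurable borel"
  unfolding GammaS_def by measurable

lemma borel_measurable_GammaS_deriv [measurable (raw)]:
  assumes [measurable]: "g \<in> borel_measurable M" "h \<in> borel_measurable M"
  shows "(\<lambda>y. GammaS_deriv i l (g y) (h y)) \<in> borel_measurable M"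
  unfolding GammaS_deriv_def by measurable

lemma borel_measurable_partial_GammaS [measurable]: "partial j (GammaS i l) \<in> borel_measurable borel"
proof -
  have "partial j (GammaS i l) =
      (\<lambda>z. if z = 0 then partial j (GammaS i l) 0 else GammaS_deriv i l z (axis j 1))"
    by (auto simp: partial_GammaS)
  also have "\<dots> \<in> borel_measurable borel"
    by measurable
  finally show ?thesis .
qed

section \<open>Pointwise bounds and Taylor remainders\<close>

lemma abs_mult_le_one: "\<bar>a\<bar> \<le> 1 \<Longrightarrow> \<bar>b\<bar> \<le> 1 \<Longrightarrow> \<bar>a * b :: real\<bar> \<le> 1"
  by (simp add: abs_mult mult_le_one)

lemma abs_component_div_norm_le: "\<bar>z $ k / norm (z::real^'n)\<bar> \<le> 1"
  by (cases "z = 0") (simp_all add: abs_divide divide_le_eq_1_pos component_le_norm_cart)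

lemma abs_inner_div_norms_le: "\<bar>(z \<bullet> u) / (norm z * norm u)\<bar> \<le> 1"
  by (cases "z = 0 \<or> u = 0")
     (auto simp: abs_divide divide_le_eq_1_pos Cauchy_Schwarz_ineq2)

lemma abs_GammaS_le: "\<bar>GammaS i l z\<bar> \<le> \<bar>ln (norm z)\<bar> + 1"
proof (cases "z = 0")
  case False
  define n where "n = norm z"
  have n: "n > 0"
    using False by (simp add: n_def)
  have "\<bar>z $ i * z $ l / n\<^sup>2\<bar> \<le> 1"
    using abs_mult_le_one[OF abs_component_div_norm_le abs_component_div_norm_le, of z i z l]
    by (simp add: n_def power2_eq_square)
  moreover have "\<bar>(if i = l then 1 else 0) * ln (1 / n)\<bar> \<le> \<bar>ln n\<bar>"
    using n by (simp add: ln_div)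
  ultimately have "\<bar>(if i = l then 1 else 0) * ln (1 / n) + z $ i * z $ l / n\<^sup>2\<bar> \<le> \<bar>ln n\<bar> + 1"
    by linarith
  moreover have "1 / (4 * pi) \<le> (1::real)"
    using pi_gt3 by simp
  ultimately have "1 / (4 * pi) * \<bar>(if i = l then 1 else 0) * ln (1 / n) + z $ i * z $ l / n\<^sup>2\<bar>
      \<le> 1 * (\<bar>ln n\<bar> + 1)"
    by (intro mult_mono) auto
  then show ?thesis
    by (simp add: GammaS_def n_def abs_mult)
qed (simp add: GammaS_def)

(* Dividing z and u by their norms leaves a polynomial in numbers of modulus at most 1. *)
lemma abs_GammaS_deriv_le: "\<bar>GammaS_deriv i l z u\<bar> \<le> norm u / norm z"
proof (cases "z = 0 \<or> u = 0")
  case False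
  define n m where "n = norm z" and "m = norm u"
  define a b where "a k = z $ k / n" and "b k = u $ k / m" for k
  define c where "c = (z \<bullet> u) / (n * m)"
  define P where "P = - (if i = l then 1 else 0) * c + (b i * a l + a i * b l) - 2 * (a i * a l * c)"
  have pos: "n > 0" "m > 0"
    using False by (simp_all add: n_def m_def)
  have "\<bar>a k\<bar> \<le> 1" "\<bar>b k\<bar> \<le> 1" "\<bar>c\<bar> \<le> 1" for k
    by (simp_all only: a_def b_def c_def n_def m_def abs_component_div_norm_le abs_inner_div_norms_le)
  then have "\<bar>P\<bar> \<le> 5"
    using abs_mult_le_one[of "a i" "a l"] abs_mult_le_one[of "b i" "a l"] abs_mult_le_one[of "a i" "b l"]
      abs_mult_le_one[of "a i * a l" c]
    unfolding P_def abs_le_iff by (cases "i = l") auto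
  have "GammaS_deriv i l z u = m / (4 * pi * n) * P"
    using pos by (simp add: GammaS_deriv_def P_def a_def b_def c_def n_def m_def
      power2_norm_eq_inner[symmetric] field_simps power2_eq_square)
  also have "\<bar>\<dots>\<bar> \<le> m / (4 * pi * n) * 5"
    using \<open>\<bar>P\<bar> \<le> 5\<close> pos by (auto simp: abs_mult intro!: divide_right_mono mult_left_mono)
  also have "\<dots> \<le> m / n"
    using pos pi_gt3 by (simp add: field_simps)
  finally show ?thesis
    by (simp add: n_def m_def)
qed (auto simp: GammaS_deriv_def)

lemma abs_GammaS_deriv2_le: "\<bar>GammaS_deriv2 i l z u v\<bar> \<le> 2 * norm u * norm v / (norm z)\<^sup>2"
proof (cases "z = 0 \<or> u = 0 \<or> v = 0")
  case False
  define n m p where "n = norm z" and "m = norm u" and "p = norm v"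
  define a b e where "a k = z $ k / n" and "b k = u $ k / m" and "e k = v $ k / p" for k
  define c1 c2 c3 where "c1 = (z \<bullet> u) / (n * m)" and "c2 = (z \<bullet> v) / (n * p)" and "c3 = (u \<bullet> v) / (m * p)"
  define \<kappa> :: real where "\<kappa> = (if i = l then 1 else 0)"
  define P where "P = - \<kappa> * c3 + 2 * \<kappa> * (c1 * c2) + b i * e l + e i * b l
    - 2 * (b i * a l * c2) - 2 * (a i * b l * c2) - 2 * (e i * a l * c1) - 2 * (a i * e l * c1)
    - 2 * (a i * a l * c3) + 8 * (a i * a l * (c1 * c2))"
  have pos: "n > 0" "m > 0" "p > 0"
    using False by (simp_all add: n_def m_def p_def)
  have unit: "\<bar>a k\<bar> \<le> 1" "\<bar>b k\<bar> \<le> 1" "\<bar>e k\<bar> \<le> 1" "\<bar>c1\<bar> \<le> 1" "\<bar>c2\<bar> \<le> 1" "\<bar>c3\<bar> \<le> 1"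
    "\<bar>\<kappa>\<bar> \<le> 1" for k
    by (simp_all only: a_def b_def e_def c1_def c2_def c3_def n_def m_def p_def
      abs_component_div_norm_le abs_inner_div_norms_le) (simp add: \<kappa>_def)
  have "\<bar>\<kappa> * c3\<bar> \<le> 1" "\<bar>\<kappa> * (c1 * c2)\<bar> \<le> 1" "\<bar>b i * e l\<bar> \<le> 1" "\<bar>e i * b l\<bar> \<le> 1"
    "\<bar>b i * a l * c2\<bar> \<le> 1" "\<bar>a i * b l * c2\<bar> \<le> 1" "\<bar>e i * a l * c1\<bar> \<le> 1"
    "\<bar>a i * e l * c1\<bar> \<le> 1" "\<bar>a i * a l * c3\<bar> \<le> 1" "\<bar>a i * a l * (c1 * c2)\<bar> \<le> 1"
    by (auto intro!: abs_mult_le_one unit)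
  then have "\<bar>P\<bar> \<le> 23"
    unfolding P_def abs_le_iff by linarith
  have "GammaS_deriv2 i l z u v = m * p / (4 * pi * n\<^sup>2) * P"
    using pos
    by (simp add: GammaS_deriv2_def P_def \<kappa>_def a_def b_def e_def c1_def c2_def c3_def n_def m_def p_def
      power2_norm_eq_inner[symmetric] field_simps power2_eq_square power3_eq_cube)
  also have "\<bar>\<dots>\<bar> \<le> m * p / (4 * pi * n\<^sup>2) * 23"
    using \<open>\<bar>P\<bar> \<le> 23\<close> pos by (auto simp: abs_mult intro!: divide_right_mono mult_left_mono)
  also have "\<dots> \<le> 2 * m * p / n\<^sup>2"
    using pos pi_gt3 by (simp add: field_simps)
  finally show ?thesis
    by (simp add: n_def m_def p_def)
qed (auto simp: GammaS_deriv2_def)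

lemma ln_le_twice_ln_exp1_add:
  fixes r n :: real
  assumes "0 < r" "r \<le> 3 * n"
  shows "ln r \<le> 2 * ln (exp 1 + n)"
proof -
  have "0 \<le> n"
    using assms by simp
  moreover have "(2::real) \<le> exp 1"
    using exp_ge_add_one_self[of 1] by simp
  ultimately have "2 * 2 * n \<le> 2 * exp 1 * n"
    by (intro mult_right_mono) auto
  moreover have "(exp 1 + n)\<^sup>2 = (exp 1)\<^sup>2 + 2 * exp 1 * n + n\<^sup>2"
    by (simp add: power2_eq_square algebra_simps)
  moreover have "0 \<le> (exp 1 :: real)\<^sup>2" "0 \<le> n\<^sup>2"
    by simp_all
  ultimately have "3 * n \<le> (exp 1 + n)\<^sup>2"
    using \<open>0 \<le> n\<close> by linarith
  then have "ln r \<le> ln ((exp 1 + n)\<^sup>2)"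
    using assms by (intro ln_mono) auto
  also have "\<dots> = 2 * ln (exp 1 + n)"
    using assms by (subst ln_realpow) (auto intro: add_pos_nonneg)
  finally show ?thesis .
qed

lemma abs_GammaS_le_inverse_norm: "norm z \<le> 1 \<Longrightarrow> \<bar>GammaS i l z\<bar> \<le> 1 / norm z"
proof (cases "z = 0")
  case False
  assume "norm z \<le> 1"
  then have "\<bar>ln (norm z)\<bar> + 1 \<le> 1 / norm z"
    using False ln_le_minus_one[of "1 / norm z"] by (simp add: ln_div)
  then show ?thesis
    using abs_GammaS_le[of i l z] by linarith
qed (simp add: GammaS_def)

lemma abs_GammaS_le_three_ln:
  assumes "1 \<le> norm z" "norm z \<le> 3 * n"
  shows "\<bar>GammaS i l z\<bar> \<le> 3 * ln (exp 1 + n)"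
proof -
  have "z \<noteq> 0"
    using assms(1) by auto
  then have "\<bar>ln (norm z)\<bar> \<le> 2 * ln (exp 1 + n)"
    using ln_le_twice_ln_exp1_add[of "norm z" n] assms by simp
  then show ?thesis
    using abs_GammaS_le[of i l z] one_le_ln_exp1_add[of n] assms by simp
qed

lemma abs_diff_le_of_real_derivative_bound:
  assumes "a \<le> b"
    and "\<And>s. a \<le> s \<Longrightarrow> s \<le> b \<Longrightarrow> (f has_real_derivative f' s) (at s)"
    and "\<And>s. a \<le> s \<Longrightarrow> s \<le> b \<Longrightarrow> \<bar>f' s\<bar> \<le> B"
  shows "\<bar>f b - f a\<bar> \<le> B * (b - a)"
proof (cases "a = b")
  case False
  with assms(1) obtain \<xi> where "a < \<xi>" "\<xi> < b" "f b - f a = (b - a) * f' \<xi>"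
    using MVT2[of a b f f'] assms(2) by force
  then show ?thesis
    using assms(3)[of \<xi>] by (simp add: abs_mult mult.commute mult_right_mono)
qed simp

lemma norm_diff_scaleR_ge_half:
  fixes x y :: "'a::real_normed_vector"
  assumes "norm y \<le> norm x / 2" "0 \<le> s" "s \<le> 1"
  shows "norm x / 2 \<le> norm (x - s *\<^sub>R y)"
  using norm_triangle_ineq2[of x "s *\<^sub>R y"] mult_left_le_one_le[of "norm y" s] assms by simp

lemma GammaS_deriv_diff_le:
  assumes "x \<noteq> 0" "norm y \<le> norm x / 2"
  shows "\<bar>GammaS_deriv i l (x - y) u - GammaS_deriv i l x u\<bar> \<le> 8 * norm u * norm y / (norm x)\<^sup>2"
proof -
  have "\<bar>GammaS_deriv i l (x + 1 *\<^sub>R (- y)) u - GammaS_deriv i l (x + 0 *\<^sub>R (- y)) u\<bar>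
      \<le> 8 * norm u * norm y / (norm x)\<^sup>2 * (1 - 0)"
  proof (rule abs_diff_le_of_real_derivative_bound)
    fix s :: real
    assume s: "0 \<le> s" "s \<le> 1"
    have far: "norm x / 2 \<le> norm (x + s *\<^sub>R (- y))"
      using norm_diff_scaleR_ge_half[OF assms(2) s] by simp
    moreover have "0 < norm x / 2"
      using assms(1) by simp
    ultimately have nz: "x + s *\<^sub>R (- y) \<noteq> 0"
      by (metis norm_zero not_le)
    then show "((\<lambda>s. GammaS_deriv i l (x + s *\<^sub>R (- y)) u) has_real_derivative
        GammaS_deriv2 i l (x + s *\<^sub>R (- y)) u (- y)) (at s)"
      by (rule GammaS_deriv_line_has_real_derivative)
    have "\<bar>GammaS_deriv2 i l (x + s *\<^sub>R (- y)) u (- y)\<bar> \<le> 2 * norm u * norm y / (norm (x + s *\<^sub>R (- y)))\<^sup>2"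
      using abs_GammaS_deriv2_le[of i l _ u "- y"] by simp
    also have "\<dots> \<le> 2 * norm u * norm y / (norm x / 2)\<^sup>2"
      using far nz assms(1) by (intro divide_left_mono power_mono mult_pos_pos) auto
    finally show "\<bar>GammaS_deriv2 i l (x + s *\<^sub>R (- y)) u (- y)\<bar> \<le> 8 * norm u * norm y / (norm x)\<^sup>2"
      by (simp add: power2_eq_square)
  qed simp
  then show ?thesis
    by simp
qed

lemma GammaS_taylor_le:
  assumes "x \<noteq> 0" "norm y \<le> norm x / 2"
  shows "\<bar>GammaS i l (x - y) - GammaS i l x + GammaS_deriv i l x y\<bar> \<le> 8 * (norm y)\<^sup>2 / (norm x)\<^sup>2"
proof -
  let ?g = "\<lambda>s. GammaS i l (x + s *\<^sub>R (- y)) + s * GammaS_deriv i l x y"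
  have "\<bar>?g 1 - ?g 0\<bar> \<le> 8 * (norm y)\<^sup>2 / (norm x)\<^sup>2 * (1 - 0)"
  proof (rule abs_diff_le_of_real_derivative_bound)
    fix s :: real
    assume s: "0 \<le> s" "s \<le> 1"
    have "norm x / 2 \<le> norm (x + s *\<^sub>R (- y))"
      using norm_diff_scaleR_ge_half[OF assms(2) s] by simp
    moreover have "0 < norm x / 2"
      using assms(1) by simp
    ultimately have "x + s *\<^sub>R (- y) \<noteq> 0"
      by (metis norm_zero not_le)
    moreover have "((\<lambda>s. s * GammaS_deriv i l x y) has_real_derivative GammaS_deriv i l x y) (at s)"
      by (auto intro!: derivative_eq_intros)
    ultimately show "(?g has_real_derivative
        GammaS_deriv i l (x + s *\<^sub>R (- y)) (- y) + GammaS_deriv i l x y) (at s)"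
      by (intro DERIV_add GammaS_line_has_real_derivative)
    have "norm (s *\<^sub>R y) \<le> norm x / 2"
      using s assms(2) mult_left_le_one_le[of "norm y" s] by simp
    then have "\<bar>GammaS_deriv i l (x - s *\<^sub>R y) y - GammaS_deriv i l x y\<bar>
        \<le> 8 * norm y * norm (s *\<^sub>R y) / (norm x)\<^sup>2"
      by (rule GammaS_deriv_diff_le[OF assms(1)])
    also have "\<dots> \<le> 8 * (norm y)\<^sup>2 / (norm x)\<^sup>2"
      using s by (intro divide_right_mono) (auto simp: power2_eq_square mult_left_le_one_le mult_left_mono)
    finally show "\<bar>GammaS_deriv i l (x + s *\<^sub>R (- y)) (- y) + GammaS_deriv i l x y\<bar>
        \<le> 8 * (norm y)\<^sup>2 / (norm x)\<^sup>2"
      by (simp add: GammaS_deriv_uminus abs_minus_commute)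
  qed simp
  then show ?thesis
    by simp
qed

section \<open>Majorants of the remainder kernels\<close>

lemma GammaS_deriv_diff_weighted_near_le:
  assumes "0 < R" "norm x = 2 * R" "norm y \<le> R" "0 \<le> \<delta>"
  shows "\<bar>GammaS_deriv i l (x - y) u - GammaS_deriv i l x u\<bar> * (1 + norm y) powr - (2 + \<delta>) \<le>
    norm u * (2 / R\<^sup>2 * norm y powr - (1 + \<delta>))"
proof -
  have "\<bar>GammaS_deriv i l (x - y) u - GammaS_deriv i l x u\<bar> \<le> 8 * norm u * norm y / (norm x)\<^sup>2"
    using assms by (intro GammaS_deriv_diff_le) auto
  then have "\<bar>GammaS_deriv i l (x - y) u - GammaS_deriv i l x u\<bar> * (1 + norm y) powr - (2 + \<delta>)
      \<le> 8 * norm u * norm y / (norm x)\<^sup>2 * (1 + norm y) powr - (2 + \<delta>)"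
    by (rule mult_right_mono) simp
  also have "\<dots> = norm u * (2 / R\<^sup>2) * (norm y ^ 1 * (1 + norm y) powr - (2 + \<delta>))"
    using assms by (simp add: power2_eq_square)
  also have "\<dots> \<le> norm u * (2 / R\<^sup>2) * norm y powr - (1 + \<delta>)"
    using power_mult_one_plus_powr_neg_le[of "norm y" "2 + \<delta>" 1] assms
    by (intro mult_left_mono) auto
  finally show ?thesis
    by (simp add: mult_ac)
qed

lemma GammaS_deriv_diff_weighted_far_le:
  assumes "0 < R" "norm x = 2 * R" "R \<le> norm y" "0 \<le> \<delta>"
  shows "\<bar>GammaS_deriv i l (x - y) u - GammaS_deriv i l x u\<bar> * (1 + norm y) powr - (2 + \<delta>) \<le>
    norm u * (1 / R * norm y powr - (2 + \<delta>)
      + R powr - (2 + \<delta>) * (indicator (cball x (2 * R)) y * (1 / norm (x - y))))"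
proof -
  let ?w = "(1 + norm y) powr - (2 + \<delta>)"
  let ?Y = "norm u * (1 / (2 * R) * norm y powr - (2 + \<delta>))"
  let ?C = "norm u * (R powr - (2 + \<delta>) * (indicator (cball x (2 * R)) y * (1 / norm (x - y))))"
  have w: "?w \<le> norm y powr - (2 + \<delta>)"
    using assms by (intro one_plus_powr_neg_le) auto
  have nonneg: "0 \<le> ?Y" "0 \<le> ?C"
    using assms by simp_all
  have regular: "norm u / (2 * R) * ?w \<le> ?Y"
    using mult_left_mono[OF w, of "norm u / (2 * R)"] assms by (simp add: mult_ac)
  have singular: "norm u / norm (x - y) * ?w \<le> ?Y + ?C"
  proof (cases "norm (x - y) \<le> 2 * R")
    case True
    have "?w \<le> R powr - (2 + \<delta>)"
      using w assms powr_mono2'[of "- (2 + \<delta>)" R "norm y"] by auto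
    then have "norm u / norm (x - y) * ?w \<le> ?C"
      using mult_left_mono[of ?w "R powr - (2 + \<delta>)" "norm u / norm (x - y)"] True
      by (simp add: dist_norm mult_ac)
    then show ?thesis
      using nonneg by linarith
  next
    case False
    then have "norm u / norm (x - y) * ?w \<le> norm u / (2 * R) * ?w"
      using assms by (intro mult_right_mono divide_left_mono) (auto simp: zero_less_mult_iff)
    then show ?thesis
      using regular nonneg by linarith
  qed
  have "\<bar>GammaS_deriv i l (x - y) u - GammaS_deriv i l x u\<bar> \<le> norm u / norm (x - y) + norm u / (2 * R)"
    using abs_GammaS_deriv_le[of i l "x - y" u] abs_GammaS_deriv_le[of i l x u] assms by simp
  then have "\<bar>GammaS_deriv i l (x - y) u - GammaS_deriv i l x u\<bar> * ?w
      \<le> (norm u / norm (x - y) + norm u / (2 * R)) * ?w"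
    by (rule mult_right_mono) simp
  also have "\<dots> = norm u / norm (x - y) * ?w + norm u / (2 * R) * ?w"
    by (rule distrib_right)
  also have "\<dots> \<le> 2 * ?Y + ?C"
    using regular singular by linarith
  also have "\<dots> = norm u * (1 / R * norm y powr - (2 + \<delta>)
      + R powr - (2 + \<delta>) * (indicator (cball x (2 * R)) y * (1 / norm (x - y))))"
    by (simp add: field_simps)
  finally show ?thesis .
qed

(* R stands for |x|/2: the terms bound the weighted kernel for |y| <= R, for |y| >= R, and
   near its singularity at y = x. *)
definition GammaS_deriv_diff_majorant :: "real \<Rightarrow> real \<Rightarrow> real^2 \<Rightarrow> real^2 \<Rightarrow> real" where
  "GammaS_deriv_diff_majorant \<delta> R x y =
     2 / R\<^sup>2 * (indicator (cball 0 R) y * norm y powr - (1 + \<delta>))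
     + 1 / R * (indicator (- ball 0 R) y * norm y powr - (2 + \<delta>))
     + R powr - (2 + \<delta>) * (indicator (cball x (2 * R)) y * (1 / norm (x - y)))"

lemma GammaS_deriv_diff_weighted_le:
  assumes "0 < R" "norm x = 2 * R" "0 \<le> \<delta>"
  shows "\<bar>GammaS_deriv i l (x - y) u - GammaS_deriv i l x u\<bar> * (1 + norm y) powr - (2 + \<delta>) \<le>
    norm u * GammaS_deriv_diff_majorant \<delta> R x y"
proof -
  let ?A = "2 / R\<^sup>2 * (indicator (cball 0 R) y * norm y powr - (1 + \<delta>))"
  let ?B = "1 / R * (indicator (- ball 0 R) y * norm y powr - (2 + \<delta>))"
  let ?C = "R powr - (2 + \<delta>) * (indicator (cball x (2 * R)) y * (1 / norm (x - y)))"
  have "\<bar>GammaS_deriv i l (x - y) u - GammaS_deriv i l x u\<bar> * (1 + norm y) powr - (2 + \<delta>)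
      \<le> norm u * (if norm y \<le> R then ?A else ?B + ?C)"
    using GammaS_deriv_diff_weighted_near_le[OF assms(1,2) _ assms(3)]
      GammaS_deriv_diff_weighted_far_le[OF assms(1,2) _ assms(3)]
    by (cases "norm y \<le> R") auto
  also have "\<dots> \<le> norm u * (?A + ?B + ?C)"
    using assms by (intro mult_left_mono) auto
  finally show ?thesis
    by (simp add: GammaS_deriv_diff_majorant_def)
qed

lemma nn_integral_GammaS_deriv_diff_majorant:
  assumes "0 < R" "0 < \<delta>" "\<delta> < 1"
  shows "(\<integral>\<^sup>+y. ennreal (GammaS_deriv_diff_majorant \<delta> R x y) \<partial>lborel) =
    ennreal (2 * pi * (2 / (1 - \<delta>) + 1 / \<delta> + 2) * R powr - (1 + \<delta>))"
proof -
  define A where "A y = 2 / R\<^sup>2 * (indicator (cball 0 R) y * norm y powr - (1 + \<delta>))" for y :: "real^2"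
  define B where "B y = 1 / R * (indicator (- ball 0 R) y * norm y powr - (2 + \<delta>))" for y :: "real^2"
  define C where "C y = R powr - (2 + \<delta>) * (indicator (cball x (2 * R)) y * (1 / norm (x - y)))" for y
  have [measurable]: "A \<in> borel_measurable lborel" "B \<in> borel_measurable lborel" "C \<in> borel_measurable lborel"
    unfolding A_def B_def C_def by measurable
  have "0 \<le> A y" "0 \<le> B y" "0 \<le> C y" for y
    using assms by (simp_all add: A_def B_def C_def)
  moreover have "GammaS_deriv_diff_majorant \<delta> R x y = A y + B y + C y" for y
    by (simp add: GammaS_deriv_diff_majorant_def A_def B_def C_def)
  ultimately have "(\<integral>\<^sup>+y. ennreal (GammaS_deriv_diff_majorant \<delta> R x y) \<partial>lborel) =
      (\<integral>\<^sup>+y. ennreal (A y) \<partial>lborel) + (\<integral>\<^sup>+y. ennreal (B y) \<partial>lborel) + (\<integral>\<^sup>+y. ennreal (C y) \<partial>lborel)"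
    by (simp add: ennreal_plus nn_integral_add)
  also have "\<dots> = ennreal (2 / R\<^sup>2 * (2 * pi * (R powr (2 - (1 + \<delta>)) / (2 - (1 + \<delta>))))
      + 1 / R * (2 * pi * (R powr (2 - (2 + \<delta>)) / ((2 + \<delta>) - 2))) + R powr - (2 + \<delta>) * (2 * pi * (2 * R)))"
  proof -
    have "(\<integral>\<^sup>+y. ennreal (A y) \<partial>lborel) = ennreal (2 / R\<^sup>2 * (2 * pi * (R powr (2 - (1 + \<delta>)) / (2 - (1 + \<delta>)))))"
      "(\<integral>\<^sup>+y. ennreal (B y) \<partial>lborel) = ennreal (1 / R * (2 * pi * (R powr (2 - (2 + \<delta>)) / ((2 + \<delta>) - 2))))"
      "(\<integral>\<^sup>+y. ennreal (C y) \<partial>lborel) = ennreal (R powr - (2 + \<delta>) * (2 * pi * (2 * R)))"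
      unfolding A_def B_def C_def using assms
      by (intro nn_integral_scaled_indicator nn_integral_cball_norm_powr nn_integral_outside_ball_norm_powr
          nn_integral_cball_inverse_dist; simp)+
    then show ?thesis
      using assms by (simp add: ennreal_plus)
  qed
  also have "\<dots> = ennreal (2 * pi * (2 / (1 - \<delta>) + 1 / \<delta> + 2) * R powr - (1 + \<delta>))"
  proof -
    define P where "P = R powr - (1 + \<delta>)"
    have powers: "R powr (2 - (1 + \<delta>)) = P * R\<^sup>2" "R powr (2 - (2 + \<delta>)) = P * R" "R powr - (2 + \<delta>) = P / R"
      unfolding P_def using assms by (simp_all add: powr_diff powr_add powr_minus field_simps power2_eq_square)
    show ?thesis
      unfolding powers P_def[symmetric] using assms by (simp add: field_simps)
  qed
  finally show ?thesis .
qed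

lemma GammaS_taylor_weighted_near_le:
  assumes "0 < R" "norm x = 2 * R" "norm y \<le> R" "0 \<le> \<delta>"
  shows "\<bar>GammaS i l (x - y) - GammaS i l x + GammaS_deriv i l x y\<bar> *
      ((1 + norm y) powr - (3 + \<delta>) / ln (exp 1 + norm y)) \<le> 2 / R\<^sup>2 * norm y powr - (1 + \<delta>)"
proof -
  have "\<bar>GammaS i l (x - y) - GammaS i l x + GammaS_deriv i l x y\<bar> \<le> 8 * (norm y)\<^sup>2 / (norm x)\<^sup>2"
    using assms by (intro GammaS_taylor_le) auto
  moreover have "(1 + norm y) powr - (3 + \<delta>) / ln (exp 1 + norm y) \<le> (1 + norm y) powr - (3 + \<delta>)"
    by (intro divide_ln_exp1_add_le) auto
  ultimately have "\<bar>GammaS i l (x - y) - GammaS i l x + GammaS_deriv i l x y\<bar> *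
      ((1 + norm y) powr - (3 + \<delta>) / ln (exp 1 + norm y))
      \<le> 8 * (norm y)\<^sup>2 / (norm x)\<^sup>2 * (1 + norm y) powr - (3 + \<delta>)"
    using one_le_ln_exp1_add[of "norm y"] by (intro mult_mono) auto
  also have "\<dots> = 2 / R\<^sup>2 * ((norm y)\<^sup>2 * (1 + norm y) powr - (3 + \<delta>))"
    using assms by (simp add: power2_eq_square)
  also have "\<dots> \<le> 2 / R\<^sup>2 * norm y powr - (1 + \<delta>)"
    using power_mult_one_plus_powr_neg_le[of "norm y" "3 + \<delta>" 2] assms by (intro mult_left_mono) auto
  finally show ?thesis .
qed

lemma abs_GammaS_diff_weighted_le:
  assumes "1 \<le> R" "norm x = 2 * R" "R \<le> norm y" "0 \<le> \<delta>"
  shows "\<bar>GammaS i l (x - y)\<bar> * ((1 + norm y) powr - (3 + \<delta>) / ln (exp 1 + norm y)) \<le>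
    3 * (1 + norm y) powr - (3 + \<delta>) + R powr - (3 + \<delta>) * (indicator (cball x 1) y * (1 / norm (x - y)))"
proof (cases "norm (x - y) \<le> 1")
  case True
  have "(1 + norm y) powr - (3 + \<delta>) / ln (exp 1 + norm y) \<le> (1 + norm y) powr - (3 + \<delta>)"
    by (intro divide_ln_exp1_add_le) auto
  also have "\<dots> \<le> norm y powr - (3 + \<delta>)"
    using assms by (intro one_plus_powr_neg_le) auto
  also have "\<dots> \<le> R powr - (3 + \<delta>)"
    using assms by (intro powr_mono2') auto
  finally have "\<bar>GammaS i l (x - y)\<bar> * ((1 + norm y) powr - (3 + \<delta>) / ln (exp 1 + norm y)) \<le>
      1 / norm (x - y) * R powr - (3 + \<delta>)"
    using abs_GammaS_le_inverse_norm[OF True] one_le_ln_exp1_add[of "norm y"] by (intro mult_mono) auto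
  then show ?thesis
    using True by (simp add: dist_norm add_increasing)
next
  case False
  have "norm (x - y) \<le> 3 * norm y"
    using norm_triangle_ineq4[of x y] assms by simp
  then have "\<bar>GammaS i l (x - y)\<bar> \<le> 3 * ln (exp 1 + norm y)"
    using False by (intro abs_GammaS_le_three_ln) auto
  then have "\<bar>GammaS i l (x - y)\<bar> * ((1 + norm y) powr - (3 + \<delta>) / ln (exp 1 + norm y)) \<le>
      3 * ln (exp 1 + norm y) * ((1 + norm y) powr - (3 + \<delta>) / ln (exp 1 + norm y))"
    using one_le_ln_exp1_add[of "norm y"] by (intro mult_right_mono) auto
  then show ?thesis
    using False one_le_ln_exp1_add[of "norm y"] by (simp add: indicator_def dist_norm)
qed

lemma GammaS_taylor_weighted_far_le:
  assumes "1 \<le> R" "norm x = 2 * R" "R \<le> norm y" "0 \<le> \<delta>"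
  shows "\<bar>GammaS i l (x - y) - GammaS i l x + GammaS_deriv i l x y\<bar> *
      ((1 + norm y) powr - (3 + \<delta>) / ln (exp 1 + norm y)) \<le>
    6 * norm y powr - (3 + \<delta>) + 1 / R * norm y powr - (2 + \<delta>)
      + R powr - (3 + \<delta>) * (indicator (cball x 1) y * (1 / norm (x - y)))"
proof -
  define L P where "L = ln (exp 1 + norm y)" and "P = (1 + norm y) powr - (3 + \<delta>)"
  have L: "1 \<le> L"
    using one_le_ln_exp1_add by (simp add: L_def)
  have P: "0 \<le> P / L" "P / L \<le> P"
    using L divide_ln_exp1_add_le[of P "norm y"] by (simp_all add: L_def P_def)
  have Py: "P \<le> norm y powr - (3 + \<delta>)"
    unfolding P_def using assms by (intro one_plus_powr_neg_le) auto
  have "\<bar>GammaS i l x\<bar> \<le> 3 * L"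
    unfolding L_def using assms by (intro abs_GammaS_le_three_ln) auto
  moreover have "\<bar>GammaS_deriv i l x y\<bar> \<le> norm y / (2 * R)"
    using abs_GammaS_deriv_le[of i l x y] assms by simp
  ultimately have "\<bar>GammaS i l (x - y) - GammaS i l x + GammaS_deriv i l x y\<bar>
      \<le> \<bar>GammaS i l (x - y)\<bar> + 3 * L + norm y / (2 * R)"
    by linarith
  then have "\<bar>GammaS i l (x - y) - GammaS i l x + GammaS_deriv i l x y\<bar> * (P / L)
      \<le> (\<bar>GammaS i l (x - y)\<bar> + 3 * L + norm y / (2 * R)) * (P / L)"
    using P by (intro mult_right_mono) auto
  also have "\<dots> = \<bar>GammaS i l (x - y)\<bar> * (P / L) + 3 * P + norm y / (2 * R) * (P / L)"
    using L by (simp add: field_simps)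
  finally have T: "\<bar>GammaS i l (x - y) - GammaS i l x + GammaS_deriv i l x y\<bar> * (P / L)
      \<le> \<bar>GammaS i l (x - y)\<bar> * (P / L) + 3 * P + norm y / (2 * R) * (P / L)" .
  have "norm y / (2 * R) * (P / L) \<le> norm y / (2 * R) * P"
    using P(2) assms by (intro mult_left_mono) auto
  also have "\<dots> \<le> norm y / R * P"
    using P assms by (intro mult_right_mono divide_left_mono) auto
  also have "\<dots> = 1 / R * (norm y ^ 1 * P)"
    by simp
  also have "\<dots> \<le> 1 / R * norm y powr - (2 + \<delta>)"
    using power_mult_one_plus_powr_neg_le[of "norm y" "3 + \<delta>" 1] assms
    by (intro mult_left_mono) (auto simp: P_def)
  finally show ?thesis
    using T Py abs_GammaS_diff_weighted_le[OF assms, of i l] unfolding L_def[symmetric] P_def[symmetric]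
    by linarith
qed

definition GammaS_taylor_majorant :: "real \<Rightarrow> real \<Rightarrow> real^2 \<Rightarrow> real^2 \<Rightarrow> real" where
  "GammaS_taylor_majorant \<delta> R x y =
     2 / R\<^sup>2 * (indicator (cball 0 R) y * norm y powr - (1 + \<delta>))
     + 6 * (indicator (- ball 0 R) y * norm y powr - (3 + \<delta>))
     + 1 / R * (indicator (- ball 0 R) y * norm y powr - (2 + \<delta>))
     + R powr - (3 + \<delta>) * (indicator (cball x 1) y * (1 / norm (x - y)))"

lemma GammaS_taylor_weighted_le:
  assumes "1 \<le> R" "norm x = 2 * R" "0 \<le> \<delta>"
  shows "\<bar>GammaS i l (x - y) - GammaS i l x + GammaS_deriv i l x y\<bar> *
      ((1 + norm y) powr - (3 + \<delta>) / ln (exp 1 + norm y)) \<le> GammaS_taylor_majorant \<delta> R x y"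
proof -
  let ?A = "2 / R\<^sup>2 * (indicator (cball 0 R) y * norm y powr - (1 + \<delta>))"
  let ?B = "6 * (indicator (- ball 0 R) y * norm y powr - (3 + \<delta>))"
  let ?C = "1 / R * (indicator (- ball 0 R) y * norm y powr - (2 + \<delta>))"
  let ?D = "R powr - (3 + \<delta>) * (indicator (cball x 1) y * (1 / norm (x - y)))"
  have "\<bar>GammaS i l (x - y) - GammaS i l x + GammaS_deriv i l x y\<bar> *
      ((1 + norm y) powr - (3 + \<delta>) / ln (exp 1 + norm y)) \<le> (if norm y \<le> R then ?A else ?B + ?C + ?D)"
    using GammaS_taylor_weighted_near_le[OF _ assms(2) _ assms(3)]
      GammaS_taylor_weighted_far_le[OF assms(1,2) _ assms(3)] assms
    by (cases "norm y \<le> R") auto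
  also have "\<dots> \<le> ?A + ?B + ?C + ?D"
    using assms by auto
  finally show ?thesis
    by (simp add: GammaS_taylor_majorant_def)
qed

lemma nn_integral_GammaS_taylor_majorant_le:
  assumes "1 \<le> R" "0 < \<delta>" "\<delta> < 1"
  shows "(\<integral>\<^sup>+y. ennreal (GammaS_taylor_majorant \<delta> R x y) \<partial>lborel) \<le>
    ennreal (2 * pi * (2 / (1 - \<delta>) + 6 / (1 + \<delta>) + 1 / \<delta> + 1) * R powr - (1 + \<delta>))"
proof -
  define A where "A y = 2 / R\<^sup>2 * (indicator (cball 0 R) y * norm y powr - (1 + \<delta>))" for y :: "real^2"
  define B where "B y = 6 * (indicator (- ball 0 R) y * norm y powr - (3 + \<delta>))" for y :: "real^2"
  define C where "C y = 1 / R * (indicator (- ball 0 R) y * norm y powr - (2 + \<delta>))" for y :: "real^2"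
  define D where "D y = R powr - (3 + \<delta>) * (indicator (cball x 1) y * (1 / norm (x - y)))" for y
  have [measurable]: "A \<in> borel_measurable lborel" "B \<in> borel_measurable lborel"
    "C \<in> borel_measurable lborel" "D \<in> borel_measurable lborel"
    unfolding A_def B_def C_def D_def by measurable
  have "0 \<le> A y" "0 \<le> B y" "0 \<le> C y" "0 \<le> D y" for y
    using assms by (simp_all add: A_def B_def C_def D_def)
  moreover have "GammaS_taylor_majorant \<delta> R x y = A y + B y + C y + D y" for y
    by (simp add: GammaS_taylor_majorant_def A_def B_def C_def D_def)
  ultimately have "(\<integral>\<^sup>+y. ennreal (GammaS_taylor_majorant \<delta> R x y) \<partial>lborel) =
      (\<integral>\<^sup>+y. ennreal (A y) \<partial>lborel) + (\<integral>\<^sup>+y. ennreal (B y) \<partial>lborel) + (\<integral>\<^sup>+y. ennreal (C y) \<partial>lborel)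
      + (\<integral>\<^sup>+y. ennreal (D y) \<partial>lborel)"
    by (simp add: ennreal_plus nn_integral_add)
  also have "\<dots> = ennreal (2 / R\<^sup>2 * (2 * pi * (R powr (2 - (1 + \<delta>)) / (2 - (1 + \<delta>))))
      + 6 * (2 * pi * (R powr (2 - (3 + \<delta>)) / ((3 + \<delta>) - 2)))
      + 1 / R * (2 * pi * (R powr (2 - (2 + \<delta>)) / ((2 + \<delta>) - 2))) + R powr - (3 + \<delta>) * (2 * pi * 1))"
  proof -
    have "(\<integral>\<^sup>+y. ennreal (A y) \<partial>lborel) = ennreal (2 / R\<^sup>2 * (2 * pi * (R powr (2 - (1 + \<delta>)) / (2 - (1 + \<delta>)))))"
      "(\<integral>\<^sup>+y. ennreal (B y) \<partial>lborel) = ennreal (6 * (2 * pi * (R powr (2 - (3 + \<delta>)) / ((3 + \<delta>) - 2))))"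
      "(\<integral>\<^sup>+y. ennreal (C y) \<partial>lborel) = ennreal (1 / R * (2 * pi * (R powr (2 - (2 + \<delta>)) / ((2 + \<delta>) - 2))))"
      "(\<integral>\<^sup>+y. ennreal (D y) \<partial>lborel) = ennreal (R powr - (3 + \<delta>) * (2 * pi * 1))"
      unfolding A_def B_def C_def D_def using assms
      by (intro nn_integral_scaled_indicator nn_integral_cball_norm_powr nn_integral_outside_ball_norm_powr
          nn_integral_cball_inverse_dist; simp)+
    then show ?thesis
      using assms by (simp add: ennreal_plus)
  qed
  also have "\<dots> \<le> ennreal (2 * pi * (2 / (1 - \<delta>) + 6 / (1 + \<delta>) + 1 / \<delta> + 1) * R powr - (1 + \<delta>))"
  proof (rule ennreal_leI)
    define P where "P = R powr - (1 + \<delta>)"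
    have powers: "R powr (2 - (1 + \<delta>)) = P * R\<^sup>2" "R powr (2 - (3 + \<delta>)) = P" "R powr (2 - (2 + \<delta>)) = P * R"
      unfolding P_def using assms by (simp_all add: powr_diff powr_add powr_minus field_simps power2_eq_square)
    have "R powr - (3 + \<delta>) \<le> P"
      unfolding P_def using assms by (intro powr_mono) auto
    then show "2 / R\<^sup>2 * (2 * pi * (R powr (2 - (1 + \<delta>)) / (2 - (1 + \<delta>))))
        + 6 * (2 * pi * (R powr (2 - (3 + \<delta>)) / ((3 + \<delta>) - 2)))
        + 1 / R * (2 * pi * (R powr (2 - (2 + \<delta>)) / ((2 + \<delta>) - 2))) + R powr - (3 + \<delta>) * (2 * pi * 1)
      \<le> 2 * pi * (2 / (1 - \<delta>) + 6 / (1 + \<delta>) + 1 / \<delta> + 1) * R powr - (1 + \<delta>)"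
      unfolding powers P_def[symmetric] using assms by (simp add: field_simps)
  qed
  finally show ?thesis .
qed

section \<open>The expansions\<close>

lemma conv_partial_GammaS_remainder_le:
  fixes F :: "real^2 \<Rightarrow> real^2^2"
  assumes F: "F \<in> X_space (2 + \<delta>)" and "0 < \<delta>" "\<delta> < 1" "0 < R" "norm x = 2 * R"
  shows "\<bar>conv (partial j (GammaS i l)) (\<lambda>y. F y $ l $ j) x
      - (LINT y|lborel. F y $ l $ j) * partial j (GammaS i l) x\<bar>
    \<le> X_norm (2 + \<delta>) F * (2 * pi * (2 / (1 - \<delta>) + 1 / \<delta> + 2) * R powr - (1 + \<delta>))"
proof -
  define N where "N = X_norm (2 + \<delta>) F"
  define K where "K = 2 * pi * (2 / (1 - \<delta>) + 1 / \<delta> + 2) * R powr - (1 + \<delta>)"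
  define e :: "real^2" where "e = axis j 1"
  define k where "k y = GammaS_deriv i l (x - y) e - GammaS_deriv i l x e" for y
  have [measurable]: "F \<in> borel_measurable borel"
    using F by (simp add: X_space_def)
  have [measurable]: "k \<in> borel_measurable lborel"
    unfolding k_def by measurable
  have x: "x \<noteq> 0"
    using assms by auto
  have "(\<integral>\<^sup>+y. ennreal (\<bar>k y\<bar> * (1 + norm y) powr - (2 + \<delta>)) \<partial>lborel)
      \<le> (\<integral>\<^sup>+y. ennreal (GammaS_deriv_diff_majorant \<delta> R x y) \<partial>lborel)"
    using GammaS_deriv_diff_weighted_le[OF assms(4,5), of \<delta> i l _ e] assms
    by (intro nn_integral_mono ennreal_leI) (simp add: k_def e_def)
  also have "\<dots> = ennreal K"
    unfolding K_def by (rule nn_integral_GammaS_deriv_diff_majorant[OF assms(4,2,3)])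
  finally have majorant: "(\<integral>\<^sup>+y. ennreal (\<bar>k y\<bar> * (1 + norm y) powr - (2 + \<delta>)) \<partial>lborel) \<le> ennreal K" .
  have bound: "\<bar>F y $ l $ j\<bar> \<le> N * (1 + norm y) powr - (2 + \<delta>)" for y
    unfolding N_def using F by (rule X_space_component_le)
  have "0 \<le> N" "0 \<le> K"
    using X_norm_nonneg[OF F] assms by (simp_all add: N_def K_def)
  note weighted = weighted_kernel_integral_bound[OF _ _ _ bound this(1) majorant this(2)]
  have remainder: "integrable lborel (\<lambda>y. k y * F y $ l $ j)" "\<bar>LINT y|lborel. k y * F y $ l $ j\<bar> \<le> N * K"
    by (rule weighted(1); measurable) (rule weighted(2); measurable)
  have "integrable lborel (\<lambda>y. F y $ l $ j)"
    using bound assms by (intro integrable_of_powr_decay[where s="2 + \<delta>"]) auto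
  moreover have "conv (partial j (GammaS i l)) (\<lambda>y. F y $ l $ j) x =
      (LINT y|lborel. k y * F y $ l $ j + partial j (GammaS i l) x * F y $ l $ j)"
    unfolding conv_def
  proof (rule integral_cong_AE)
    show "AE y in lborel. partial j (GammaS i l) (x - y) * F y $ l $ j =
        k y * F y $ l $ j + partial j (GammaS i l) x * F y $ l $ j"
      \<comment> \<open>\<open>partial_GammaS\<close> needs \<open>x - y \<noteq> 0\<close>, which holds for almost every \<open>y\<close>.\<close>
      using AE_lborel_singleton[of x]
      by eventually_elim (use x in \<open>simp add: k_def e_def partial_GammaS algebra_simps\<close>)
  qed simp_all
  ultimately show ?thesis
    using remainder x by (simp add: N_def K_def partial_GammaS e_def)
qed

lemma conv_GammaS_remainder_le:
  fixes f :: "real^2 \<Rightarrow> real^2"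
  assumes f: "f \<in> Xlog_space (3 + \<delta>)" and "0 < \<delta>" "\<delta> < 1" "1 \<le> R" "norm x = 2 * R"
  shows "\<bar>conv (GammaS i l) (\<lambda>y. f y $ l) x - (LINT y|lborel. f y $ l) * GammaS i l x
      + (\<Sum>j\<in>UNIV. (LINT y|lborel. f y $ l * y $ j) * partial j (GammaS i l) x)\<bar>
    \<le> Xlog_norm (3 + \<delta>) f * (2 * pi * (2 / (1 - \<delta>) + 6 / (1 + \<delta>) + 1 / \<delta> + 1) * R powr - (1 + \<delta>))"
proof -
  define N where "N = Xlog_norm (3 + \<delta>) f"
  define K where "K = 2 * pi * (2 / (1 - \<delta>) + 6 / (1 + \<delta>) + 1 / \<delta> + 1) * R powr - (1 + \<delta>)"
  define w where "w y = (1 + norm y) powr - (3 + \<delta>) / ln (exp 1 + norm y)" for y :: "real^2"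
  define k where "k y = GammaS i l (x - y) - GammaS i l x + GammaS_deriv i l x y" for y
  have [measurable]: "f \<in> borel_measurable borel"
    using f by (simp add: Xlog_space_def)
  have [measurable]: "k \<in> borel_measurable lborel" "w \<in> borel_measurable lborel"
    unfolding k_def w_def by measurable
  have x: "x \<noteq> 0"
    using assms by auto
  have "(\<integral>\<^sup>+y. ennreal (\<bar>k y\<bar> * w y) \<partial>lborel) \<le> (\<integral>\<^sup>+y. ennreal (GammaS_taylor_majorant \<delta> R x y) \<partial>lborel)"
    using GammaS_taylor_weighted_le[OF assms(4,5), of \<delta> i l] assms
    by (intro nn_integral_mono ennreal_leI) (simp add: k_def w_def)
  also have "\<dots> \<le> ennreal K"
    unfolding K_def by (rule nn_integral_GammaS_taylor_majorant_le[OF assms(4,2,3)])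
  finally have majorant: "(\<integral>\<^sup>+y. ennreal (\<bar>k y\<bar> * w y) \<partial>lborel) \<le> ennreal K" .
  have bound: "\<bar>f y $ l\<bar> \<le> N * w y" for y
    unfolding N_def w_def using f by (rule Xlog_space_component_le)
  have "0 \<le> N" "0 \<le> K"
    using Xlog_norm_nonneg[OF f] assms by (simp_all add: N_def K_def)
  note weighted = weighted_kernel_integral_bound[OF _ _ _ bound this(1) majorant this(2)]
  have remainder: "integrable lborel (\<lambda>y. k y * f y $ l)" "\<bar>LINT y|lborel. k y * f y $ l\<bar> \<le> N * K"
    by (rule weighted(1); measurable) (rule weighted(2); measurable)
  have "GammaS i l (x - y) * f y $ l =
      k y * f y $ l + GammaS i l x * f y $ l - (\<Sum>j\<in>UNIV. partial j (GammaS i l) x * (f y $ l * y $ j))" for y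
    using x by (simp add: k_def partial_GammaS GammaS_deriv_eq_sum_axis[of i l x y] algebra_simps
        sum_distrib_left sum_distrib_right)
  then have "conv (GammaS i l) (\<lambda>y. f y $ l) x =
      (LINT y|lborel. k y * f y $ l) + GammaS i l x * (LINT y|lborel. f y $ l)
      - (\<Sum>j\<in>UNIV. partial j (GammaS i l) x * (LINT y|lborel. f y $ l * y $ j))"
    unfolding conv_def using remainder(1) integrable_Xlog_space_moments[OF f assms(2)]
    by (simp add: integral_sum)
  then show ?thesis
    using remainder(2) by (simp add: N_def K_def mult.commute)
qed

lemma powr_mult_half_powr_neg_le:
  fixes \<rho> p :: real
  assumes "0 < \<rho>" "p \<le> 2"
  shows "\<rho> powr p * (\<rho> / 2) powr - p \<le> 4"
proof -
  have "\<rho> powr p * (\<rho> / 2) powr - p = 2 powr p"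
    using assms by (simp add: powr_divide powr_minus field_simps)
  also have "\<dots> \<le> 2 powr 2"
    using assms by (intro powr_mono) auto
  finally show ?thesis
    by simp
qed

lemma conv_GammaS_expansion:
  fixes f :: "real^2 \<Rightarrow> real^2"
  assumes "f \<in> Xlog_space (3 + \<delta>)" "exp 1 \<le> norm x" "0 < \<delta>" "\<delta> < 1"
  shows "norm x powr (1 + \<delta>) *
      \<bar>(\<Sum>l\<in>UNIV. conv (GammaS i l) (\<lambda>y. f y $ l) x)
        - (\<Sum>l\<in>UNIV. (LINT y|lborel. f y $ l) * GammaS i l x)
        + (\<Sum>l\<in>UNIV. \<Sum>j\<in>UNIV. (LINT y|lborel. f y $ l * y $ j) * partial j (GammaS i l) x)\<bar>
    \<le> 16 * pi * (2 / (1 - \<delta>) + 6 / (1 + \<delta>) + 1 / \<delta> + 1) * Xlog_norm (3 + \<delta>) f"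
    (is "_ * \<bar>?S\<bar> \<le> _")
proof -
  define R where "R = norm x / 2"
  define B where "B = Xlog_norm (3 + \<delta>) f * (2 * pi * (2 / (1 - \<delta>) + 6 / (1 + \<delta>) + 1 / \<delta> + 1))"
  have R: "1 \<le> R" "norm x = 2 * R"
    using assms(2) exp_ge_add_one_self[of 1] unfolding R_def by linarith+
  have "0 \<le> B"
    using Xlog_norm_nonneg[OF assms(1)] assms by (simp add: B_def)
  have "\<bar>?S\<bar> \<le> (\<Sum>l\<in>(UNIV::2 set). \<bar>conv (GammaS i l) (\<lambda>y. f y $ l) x - (LINT y|lborel. f y $ l) * GammaS i l x
      + (\<Sum>j\<in>UNIV. (LINT y|lborel. f y $ l * y $ j) * partial j (GammaS i l) x)\<bar>)"
    unfolding sum_subtractf[symmetric] sum.distrib[symmetric] by (rule sum_abs)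
  also have "\<dots> \<le> (\<Sum>l\<in>(UNIV::2 set). B * R powr - (1 + \<delta>))"
    by (intro sum_mono order_trans[OF conv_GammaS_remainder_le[OF assms(1,3,4) R]])
       (simp add: B_def mult_ac)
  finally have "\<bar>?S\<bar> \<le> 2 * (B * R powr - (1 + \<delta>))"
    by simp
  then have "norm x powr (1 + \<delta>) * \<bar>?S\<bar> \<le> norm x powr (1 + \<delta>) * (2 * (B * R powr - (1 + \<delta>)))"
    by (rule mult_left_mono) simp
  also have "\<dots> = 2 * B * (norm x powr (1 + \<delta>) * (norm x / 2) powr - (1 + \<delta>))"
    by (simp add: R_def)
  also have "\<dots> \<le> 2 * B * 4"
    using R assms \<open>0 \<le> B\<close> by (intro mult_left_mono powr_mult_half_powr_neg_le) auto
  also have "\<dots> = 16 * pi * (2 / (1 - \<delta>) + 6 / (1 + \<delta>) + 1 / \<delta> + 1) * Xlog_norm (3 + \<delta>) f"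
    by (simp add: B_def)
  finally show ?thesis .
qed

lemma conv_partial_GammaS_expansion:
  fixes F :: "real^2 \<Rightarrow> real^2^2"
  assumes "F \<in> X_space (2 + \<delta>)" "exp 1 \<le> norm x" "0 < \<delta>" "\<delta> < 1"
  shows "norm x powr (1 + \<delta>) *
      \<bar>(\<Sum>l\<in>UNIV. \<Sum>j\<in>UNIV. conv (partial j (GammaS i l)) (\<lambda>y. F y $ l $ j) x)
        - (\<Sum>l\<in>UNIV. \<Sum>j\<in>UNIV. (LINT y|lborel. F y $ l $ j) * partial j (GammaS i l) x)\<bar>
    \<le> 32 * pi * (2 / (1 - \<delta>) + 1 / \<delta> + 2) * X_norm (2 + \<delta>) F"
    (is "_ * \<bar>?S\<bar> \<le> _")
proof -
  define R where "R = norm x / 2"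
  define B where "B = X_norm (2 + \<delta>) F * (2 * pi * (2 / (1 - \<delta>) + 1 / \<delta> + 2))"
  have R: "0 < R" "norm x = 2 * R"
    using assms(2) exp_ge_add_one_self[of 1] unfolding R_def by linarith+
  have "0 \<le> B"
    using X_norm_nonneg[OF assms(1)] assms by (simp add: B_def)
  have "\<bar>?S\<bar> \<le> (\<Sum>l\<in>(UNIV::2 set). \<Sum>j\<in>(UNIV::2 set).
      \<bar>conv (partial j (GammaS i l)) (\<lambda>y. F y $ l $ j) x
        - (LINT y|lborel. F y $ l $ j) * partial j (GammaS i l) x\<bar>)"
    unfolding sum_subtractf[symmetric] by (intro order_trans[OF sum_abs] sum_mono sum_abs)
  also have "\<dots> \<le> (\<Sum>l\<in>(UNIV::2 set). \<Sum>j\<in>(UNIV::2 set). B * R powr - (1 + \<delta>))"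
    by (intro sum_mono order_trans[OF conv_partial_GammaS_remainder_le[OF assms(1,3,4) R]])
       (simp add: B_def mult_ac)
  finally have "\<bar>?S\<bar> \<le> 4 * (B * R powr - (1 + \<delta>))"
    by simp
  then have "norm x powr (1 + \<delta>) * \<bar>?S\<bar> \<le> norm x powr (1 + \<delta>) * (4 * (B * R powr - (1 + \<delta>)))"
    by (rule mult_left_mono) simp
  also have "\<dots> = 4 * B * (norm x powr (1 + \<delta>) * (norm x / 2) powr - (1 + \<delta>))"
    by (simp add: R_def)
  also have "\<dots> \<le> 4 * B * 4"
    using R assms \<open>0 \<le> B\<close> by (intro mult_left_mono powr_mult_half_powr_neg_le) auto
  also have "\<dots> = 32 * pi * (2 / (1 - \<delta>) + 1 / \<delta> + 2) * X_norm (2 + \<delta>) F"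
    by (simp add: B_def)
  finally show ?thesis .
qed

theorem lemma2p1:
  fixes \<delta> :: real
  assumes "0 < \<delta>" and "\<delta> < 1"
  shows "(\<exists>C>0. \<forall>f :: real^2 \<Rightarrow> real^2. f \<in> Xlog_space (3 + \<delta>) \<longrightarrow>
            (\<forall>i x. norm x \<ge> exp 1 \<longrightarrow>
               norm x powr (1 + \<delta>) *
               \<bar>(\<Sum>l\<in>UNIV. conv (GammaS i l) (\<lambda>y. f y $ l) x)
                 - (\<Sum>l\<in>UNIV. (LINT y|lborel. f y $ l) * GammaS i l x)
                 + (\<Sum>l\<in>UNIV. \<Sum>j\<in>UNIV. (LINT y|lborel. f y $ l * y $ j) * partial j (GammaS i l) x)\<bar>
               \<le> C * Xlog_norm (3 + \<delta>) f))
       \<and> (\<exists>C'>0. \<forall>F :: real^2 \<Rightarrow> real^2^2. F \<in> X_space (2 + \<delta>) \<longrightarrow>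
            (\<forall>i x. norm x \<ge> exp 1 \<longrightarrow>
               norm x powr (1 + \<delta>) *
               \<bar>(\<Sum>l\<in>UNIV. \<Sum>j\<in>UNIV. conv (partial j (GammaS i l)) (\<lambda>y. F y $ l $ j) x)
                 - (\<Sum>l\<in>UNIV. \<Sum>j\<in>UNIV. (LINT y|lborel. F y $ l $ j) * partial j (GammaS i l) x)\<bar>
               \<le> C' * X_norm (2 + \<delta>) F))"
proof -
  have "0 < 16 * pi * (2 / (1 - \<delta>) + 6 / (1 + \<delta>) + 1 / \<delta> + 1)"
    "0 < 32 * pi * (2 / (1 - \<delta>) + 1 / \<delta> + 2)"
    using assms by (simp_all add: add_pos_pos)
  then show ?thesis
    using conv_GammaS_expansion[OF _ _ assms] conv_partial_GammaS_expansion[OF _ _ assms] by blast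
qed

end
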